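(* Let $p\ge 1$ be an integer. (i) For all $x\in[0,1]^p, y\in\{0,1\}^p$, and for all $x\in\{0,1\}^p, y\in[0,1]^p$, one has $\overline{\Delta}_{\mathrm{JML1}}(x,y)=\overline{\Delta}_{\mathrm{JML2}}(x,y)=\overline{\Delta}_{\mathrm{SJL},L^1}(x,y)$. (ii) For all $x,y\in[0,1]^p$, $\overline{\Delta}_{\mathrm{JML1},L^2}(x,y)=\overline{\Delta}_{\mathrm{JML2},L^2}(x,y)=\overline{\Delta}_{\mathrm{SJL},L^2}(x,y)$. (iii) There exist $x,y\in[0,1]^p$ with $\overline{\Delta}_{\mathrm{JML1}}(x,y)\neq\overline{\Delta}_{\mathrm{JML2}}(x,y)$ and $\overline{\Delta}_{\mathrm{JML2}}(x,y)\neq\overline{\Delta}_{\mathrm{SJL},L^1}(x,y)$.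
   Context: For $x,y \in [0,1]^p$ write $\|x\|_1=\sum_{i=1}^p |x_i|$, $\|x\|_2^2=\sum_{i=1}^p x_i^2$ and $\langle x,y\rangle=\sum_{i=1}^p x_iy_i$. Define, for $x,y\in[0,1]^p$: $\overline{\Delta}_{\mathrm{JML1}}(x,y) = 1 - \frac{\|x\|_1+\|y\|_1-\|x-y\|_1}{\|x\|_1+\|y\|_1+\|x-y\|_1}$, $\overline{\Delta}_{\mathrm{JML2}}(x,y) = 1 - \frac{\langle x,y\rangle}{\langle x,y\rangle+\|x-y\|_1}$, $\overline{\Delta}_{\mathrm{SJL},L^1}(x,y) = 1 - \frac{\langle x,y\rangle}{\|x\|_1+\|y\|_1-\langle x,y\rangle}$, $\overline{\Delta}_{\mathrm{JML1},L^2}(x,y) = 1 - \frac{\|x\|_2^2+\|y\|_2^2-\|x-y\|_2^2}{\|x\|_2^2+\|y\|_2^2+\|x-y\|_2^2}$, $\overline{\Delta}_{\mathrm{JML2},L^2}(x,y) = 1 - \frac{\langle x,y\rangle}{\langle x,y\rangle+\|x-y\|_2^2}$, $\overline{\Delta}_{\mathrm{SJL},L^2}(x,y) = 1 - \frac{\langle x,y\rangle}{\|x\|_2^2+\|y\|_2^2-\langle x,y\rangle}$. All these denominators vanish only when $x=y=0$; by convention each of these functions takes the value $0$ at $(x,y)=(0,0)$. *)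

theory Defs
  imports "HOL-Analysis.Analysis"
begin

text \<open>Vectors in [0,1]^p are modelled as elements of real^'n where the finite
index type 'n has cardinality p (so p \<ge> 1 automatically).\<close>

definition unit_cube :: "(real^'n) set" where
  "unit_cube = {x. \<forall>i. 0 \<le> x$i \<and> x$i \<le> 1}"

definition binary_cube :: "(real^'n) set" where
  "binary_cube = {x. \<forall>i. x$i = 0 \<or> x$i = 1}"

definition l1norm :: "real^'n \<Rightarrow> real" where
  "l1norm x = (\<Sum>i\<in>UNIV. \<bar>x$i\<bar>)"

definition sqnorm2 :: "real^'n \<Rightarrow> real" where
  "sqnorm2 x = (\<Sum>i\<in>UNIV. (x$i)^2)"

definition ip :: "real^'n \<Rightarrow> real^'n \<Rightarrow> real" where
  "ip x y = (\<Sum>i\<in>UNIV. x$i * y$i)"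

definition dJML1 :: "real^'n \<Rightarrow> real^'n \<Rightarrow> real" where
  "dJML1 x y = (if x = 0 \<and> y = 0 then 0 else
     1 - (l1norm x + l1norm y - l1norm (x - y)) / (l1norm x + l1norm y + l1norm (x - y)))"

definition dJML2 :: "real^'n \<Rightarrow> real^'n \<Rightarrow> real" where
  "dJML2 x y = (if x = 0 \<and> y = 0 then 0 else
     1 - ip x y / (ip x y + l1norm (x - y)))"

definition dSJL_L1 :: "real^'n \<Rightarrow> real^'n \<Rightarrow> real" where
  "dSJL_L1 x y = (if x = 0 \<and> y = 0 then 0 else
     1 - ip x y / (l1norm x + l1norm y - ip x y))"

definition dJML1_L2 :: "real^'n \<Rightarrow> real^'n \<Rightarrow> real" where
  "dJML1_L2 x y = (if x = 0 \<and> y = 0 then 0 else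
     1 - (sqnorm2 x + sqnorm2 y - sqnorm2 (x - y)) / (sqnorm2 x + sqnorm2 y + sqnorm2 (x - y)))"

definition dJML2_L2 :: "real^'n \<Rightarrow> real^'n \<Rightarrow> real" where
  "dJML2_L2 x y = (if x = 0 \<and> y = 0 then 0 else
     1 - ip x y / (ip x y + sqnorm2 (x - y)))"

definition dSJL_L2 :: "real^'n \<Rightarrow> real^'n \<Rightarrow> real" where
  "dSJL_L2 x y = (if x = 0 \<and> y = 0 then 0 else
     1 - ip x y / (sqnorm2 x + sqnorm2 y - ip x y))"

end

theory Submission
  imports Defs
begin

text \<open>Write \<open>S = N x + N y\<close>, \<open>D = N (x - y)\<close> and \<open>I = \<langle>x, y\<rangle>\<close>, where \<open>N\<close> is the
  \<open>L\<^sup>1\<close> norm or the squared \<open>L\<^sup>2\<close> norm. Whenever \<open>S - D = 2 I\<close>, the three dissimilarities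
  \<open>1 - (S - D)/(S + D)\<close>, \<open>1 - I/(I + D)\<close> and \<open>1 - I/(S - I)\<close> coincide, since \<open>S + D = 2 (I + D)\<close>
  and \<open>S - I = I + D\<close>. For the squared \<open>L\<^sup>2\<close> norm \<open>S - D = 2 I\<close> is the polarization identity.
  For the \<open>L\<^sup>1\<close> norm of nonnegative vectors \<open>S - D = 2 \<Sum>\<^sub>i min x\<^sub>i y\<^sub>i\<close>, and \<open>min a b = a b\<close>
  as soon as one of \<open>a, b \<in> [0,1]\<close> is \<open>0\<close> or \<open>1\<close>. The constant vectors \<open>1/2\<close> and \<open>1/4\<close> give
  the three distinct \<open>L\<^sup>1\<close> values \<open>1/2\<close>, \<open>2/3\<close>, \<open>4/5\<close>.\<close>

lemma jaccard_forms_eq: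
  fixes s d i :: real
  assumes "s - d = 2 * i"
  shows "1 - (s - d) / (s + d) = 1 - i / (i + d)"
    and "1 - i / (i + d) = 1 - i / (s - i)"
proof -
  have "s + d = 2 * (i + d)" and "s - i = i + d"
    using assms by simp_all
  with assms show "1 - (s - d) / (s + d) = 1 - i / (i + d)" and "1 - i / (i + d) = 1 - i / (s - i)"
    by (simp_all only: mult_divide_mult_cancel_left_if) simp_all
qed

lemma sqnorm2_polarization: "sqnorm2 x + sqnorm2 y - sqnorm2 (x - y) = 2 * ip x y"
  by (simp add: sqnorm2_def ip_def power2_diff sum.distrib sum_subtractf sum_distrib_left mult.assoc)

lemma abs_add_abs_minus_abs_diff:
  fixes a b :: real
  assumes "0 \<le> a" "0 \<le> b"
  shows "\<bar>a\<bar> + \<bar>b\<bar> - \<bar>a - b\<bar> = 2 * min a b"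
  using assms by (auto simp: min_def)

lemma min_eq_mult_if_binary:
  fixes a b :: real
  assumes "0 \<le> a" "a \<le> 1" "b = 0 \<or> b = 1"
  shows "min a b = a * b"
  using assms by auto

lemma l1norm_polarization_nonneg:
  assumes "\<And>i. 0 \<le> x $ i" "\<And>i. 0 \<le> y $ i"
  shows "l1norm x + l1norm y - l1norm (x - y) = 2 * (\<Sum>i\<in>UNIV. min (x $ i) (y $ i))"
proof -
  have "l1norm x + l1norm y - l1norm (x - y) = (\<Sum>i\<in>UNIV. \<bar>x $ i\<bar> + \<bar>y $ i\<bar> - \<bar>x $ i - y $ i\<bar>)"
    by (simp add: l1norm_def sum.distrib sum_subtractf)
  also have "\<dots> = (\<Sum>i\<in>UNIV. 2 * min (x $ i) (y $ i))"
    using assms by (intro sum.cong refl abs_add_abs_minus_abs_diff)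
  finally show ?thesis
    by (simp add: sum_distrib_left)
qed

lemma l1norm_polarization_cube:
  assumes "(x \<in> unit_cube \<and> y \<in> binary_cube) \<or> (x \<in> binary_cube \<and> y \<in> unit_cube)"
  shows "l1norm x + l1norm y - l1norm (x - y) = 2 * ip x y"
proof -
  have nonneg: "0 \<le> x $ i" "0 \<le> y $ i" for i
    using assms unfolding unit_cube_def binary_cube_def by (smt (verit) mem_Collect_eq)+
  have "min (x $ i) (y $ i) = x $ i * y $ i" for i
    using assms min_eq_mult_if_binary[of "x $ i" "y $ i"] min_eq_mult_if_binary[of "y $ i" "x $ i"]
    by (auto simp: unit_cube_def binary_cube_def min.commute mult.commute)
  then show ?thesis
    by (simp add: l1norm_polarization_nonneg[OF nonneg] ip_def)
qed

lemma L1_dissimilarities_distinct_at_half_quarter: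
  defines "x \<equiv> (\<chi> i. 1/2) :: real^'n"
    and "y \<equiv> (\<chi> i. 1/4) :: real^'n"
  shows "dJML1 x y = 1/2" and "dJML2 x y = 2/3" and "dSJL_L1 x y = 4/5"
proof -
  define c where "c = real CARD('n)"
  have "c > 0"
    by (simp add: c_def)
  have "x \<noteq> 0"
    by (simp add: x_def vec_eq_iff)
  have "l1norm x = c/2" "l1norm y = c/4" "l1norm (x - y) = c/4" "ip x y = c/8"
    by (simp_all add: l1norm_def ip_def x_def y_def c_def)
  with \<open>c > 0\<close> \<open>x \<noteq> 0\<close>
  show "dJML1 x y = 1/2" and "dJML2 x y = 2/3" and "dSJL_L1 x y = 4/5"
    by (simp_all add: dJML1_def dJML2_def dSJL_L1_def field_simps)
qed

theorem theorem2:
  shows "(\<forall>x y :: real^'n.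
            ((x \<in> unit_cube \<and> y \<in> binary_cube) \<or> (x \<in> binary_cube \<and> y \<in> unit_cube)) \<longrightarrow>
            dJML1 x y = dJML2 x y \<and> dJML2 x y = dSJL_L1 x y)
       \<and> (\<forall>x y :: real^'n. x \<in> unit_cube \<and> y \<in> unit_cube \<longrightarrow>
            dJML1_L2 x y = dJML2_L2 x y \<and> dJML2_L2 x y = dSJL_L2 x y)
       \<and> (\<exists>x y :: real^'n. x \<in> unit_cube \<and> y \<in> unit_cube \<and>
            dJML1 x y \<noteq> dJML2 x y \<and> dJML2 x y \<noteq> dSJL_L1 x y)"
proof (intro conjI allI impI)
  fix x y :: "real^'n"
  assume "(x \<in> unit_cube \<and> y \<in> binary_cube) \<or> (x \<in> binary_cube \<and> y \<in> unit_cube)"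
  note eqs = jaccard_forms_eq[OF l1norm_polarization_cube[OF this]]
  show "dJML1 x y = dJML2 x y" "dJML2 x y = dSJL_L1 x y"
    by (simp_all only: dJML1_def dJML2_def dSJL_L1_def eqs)
next
  fix x y :: "real^'n"
  note eqs = jaccard_forms_eq[OF sqnorm2_polarization[of x y]]
  show "dJML1_L2 x y = dJML2_L2 x y" "dJML2_L2 x y = dSJL_L2 x y"
    by (simp_all only: dJML1_L2_def dJML2_L2_def dSJL_L2_def eqs)
next
  let ?x = "(\<chi> i. 1/2) :: real^'n" and ?y = "(\<chi> i. 1/4) :: real^'n"
  have in_cube: "?x \<in> unit_cube" "?y \<in> unit_cube"
    by (simp_all add: unit_cube_def)
  show "\<exists>x y :: real^'n. x \<in> unit_cube \<and> y \<in> unit_cube \<and>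
            dJML1 x y \<noteq> dJML2 x y \<and> dJML2 x y \<noteq> dSJL_L1 x y"
    by (rule exI[of _ ?x], rule exI[of _ ?y])
      (simp add: in_cube L1_dissimilarities_distinct_at_half_quarter)
qed

end
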